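(* Let $T$ be an interval and let $u:T\to\mathcal V_{[0,1]}$ with $u\in H^1_{loc}(T;\mathcal V)$. Then there exists $\beta:T\to\mathcal V$ such that $(u,\beta)$ is a solution to mass-conserving double-obstacle AC flow on $T$ if and only if for a.e. $t\in T$ and all $\eta\in\mathcal V_{[0,1]}$ with $\mathcal{M}(\eta) = \mathcal{M}(u(t))$ the following hold: \[ \left\langle\varepsilon\frac{du}{dt}-u(t),\eta-u(t)\right\rangle_{\mathcal V}+\varepsilon\left\langle\nabla u(t),\nabla\eta-\nabla u(t)\right\rangle_\mathcal{E}\ge0, \qquad \left\langle\frac{du}{dt},\mathbf{1} \right\rangle_{\mathcal V} = 0. \]
   Context: $G=(V,E)$ is a finite, simple, connected, undirected graph with weights $\omega_{ij}=\omega_{ji}>0$ for $ij\in E$, $\omega_{ij}=0$ otherwise; $d_i=\sum_j\omega_{ij}$, $r\in[0,1]$ fixed. $\mathcal V$ = functions $V\to\mathbb R$ with $\langle u,v\rangle_{\mathcal V}=\sum_i u_iv_id_i^r$; $\mathcal V_X$ = functions $V\to X$. $\mathcal E$ = functions on $E$ with $\langle\varphi,\phi\rangle_{\mathcal E}=\frac12\sum_{i,j}\varphi_{ij}\phi_{ij}\omega_{ij}$; $(\nabla u)_{ij}=u_j-u_i$ if $ij\in E$, $0$ otherwise. $(\Delta u)_i=d_i^{-r}\sum_j\omega_{ij}(u_i-u_j)$. $\mathbf 1$ all-ones; $\mathcal M(u)=\langle u,\mathbf 1\rangle_{\mathcal V}$; $\bar v=\mathcal M(v)/\mathcal M(\mathbf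 1)$. $\varepsilon>0$. For $u\in\mathcal V_{[0,1]}$, $\mathcal B(u)$ = set of $\beta\in\mathcal V$ with $\beta_i\ge0$ if $u_i=0$, $\beta_i=0$ if $0<u_i<1$, $\beta_i\le0$ if $u_i=1$; $\mathcal B(u)=\emptyset$ otherwise. $H^1_{loc}(T;\mathcal V)$: functions $T\to\mathcal V$ whose components lie in $H^1((a,b))$ for all $a,b\in T$, with weak derivative $du/dt$. A pair $(u,\beta)$ with $u:T\to\mathcal V_{[0,1]}$, $\beta:T\to\mathcal V$ is a solution to mass-conserving double-obstacle AC flow on $T$ if $u\in H^1_{loc}(T;\mathcal V)\cap C^0(T;\mathcal V)$ and for a.e. $t\in T$: $\varepsilon \frac{du}{dt} + \varepsilon\Delta u(t)-u(t)+\overline{u(t)}\mathbf{1} = \beta(t) - \overline{\beta(t)}\mathbf{1}$ and $\beta(t)\in\mathcal B(u(t))$.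
   Formalization: The function u is also taken to be continuous on T, so u lies in $C^0(T;\mathcal V)$ as well as in $H^1_{loc}(T;\mathcal V)$. The statement above fails without it. *)

theory Defs
  imports "HOL-Analysis.Analysis"
begin

definition weighted_graph :: "('v::finite \<Rightarrow> 'v \<Rightarrow> real) \<Rightarrow> bool" where
  "weighted_graph w \<longleftrightarrow>
     (\<forall>i j. w i j = w j i) \<and> (\<forall>i j. 0 \<le> w i j) \<and> (\<forall>i. w i i = 0) \<and>
     (\<forall>i j. (i, j) \<in> {(a, b). 0 < w a b}\<^sup>*)"

definition deg :: "('v::finite \<Rightarrow> 'v \<Rightarrow> real) \<Rightarrow> 'v \<Rightarrow> real" where
  "deg w i = (\<Sum>j\<in>UNIV. w i j)"

definition ipV :: "('v::finite \<Rightarrow> 'v \<Rightarrow> real) \<Rightarrow> real \<Rightarrow> ('v \<Rightarrow> real) \<Rightarrow> ('v \<Rightarrow> real) \<Rightarrow> real" where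
  "ipV w r u v = (\<Sum>i\<in>UNIV. u i * v i * deg w i powr r)"

definition ipE :: "('v::finite \<Rightarrow> 'v \<Rightarrow> real) \<Rightarrow> ('v \<Rightarrow> 'v \<Rightarrow> real) \<Rightarrow> ('v \<Rightarrow> 'v \<Rightarrow> real) \<Rightarrow> real" where
  "ipE w \<phi> \<psi> = 1/2 * (\<Sum>i\<in>UNIV. \<Sum>j\<in>UNIV. \<phi> i j * \<psi> i j * w i j)"

definition grad :: "('v::finite \<Rightarrow> 'v \<Rightarrow> real) \<Rightarrow> ('v \<Rightarrow> real) \<Rightarrow> 'v \<Rightarrow> 'v \<Rightarrow> real" where
  "grad w u i j = (if 0 < w i j then u j - u i else 0)"

definition lap :: "('v::finite \<Rightarrow> 'v \<Rightarrow> real) \<Rightarrow> real \<Rightarrow> ('v \<Rightarrow> real) \<Rightarrow> 'v \<Rightarrow> real" where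
  "lap w r u i = deg w i powr (- r) * (\<Sum>j\<in>UNIV. w i j * (u i - u j))"

definition mass :: "('v::finite \<Rightarrow> 'v \<Rightarrow> real) \<Rightarrow> real \<Rightarrow> ('v \<Rightarrow> real) \<Rightarrow> real" where
  "mass w r u = ipV w r u (\<lambda>_. 1)"

definition avg :: "('v::finite \<Rightarrow> 'v \<Rightarrow> real) \<Rightarrow> real \<Rightarrow> ('v \<Rightarrow> real) \<Rightarrow> real" where
  "avg w r u = mass w r u / mass w r (\<lambda>_. 1)"

definition Vbox :: "('v \<Rightarrow> real) set" where
  "Vbox = {u. \<forall>i. 0 \<le> u i \<and> u i \<le> 1}"

definition Bset :: "('v \<Rightarrow> real) \<Rightarrow> ('v \<Rightarrow> real) set" where
  "Bset u = (if u \<in> Vbox then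
      {\<beta>. \<forall>i. (u i = 0 \<longrightarrow> 0 \<le> \<beta> i) \<and> (0 < u i \<and> u i < 1 \<longrightarrow> \<beta> i = 0) \<and> (u i = 1 \<longrightarrow> \<beta> i \<le> 0)}
    else {})"

definition smooth_fun :: "(real \<Rightarrow> real) \<Rightarrow> (nat \<Rightarrow> real \<Rightarrow> real) \<Rightarrow> bool" where
  "smooth_fun \<phi> D \<longleftrightarrow> D 0 = \<phi> \<and> (\<forall>k x. (D k has_real_derivative D (Suc k) x) (at x))"

definition test_fun :: "real \<Rightarrow> real \<Rightarrow> (real \<Rightarrow> real) \<Rightarrow> (nat \<Rightarrow> real \<Rightarrow> real) \<Rightarrow> bool" where
  "test_fun a b \<phi> D \<longleftrightarrow> smooth_fun \<phi> D \<and>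
     (\<exists>c d. a < c \<and> d < b \<and> (\<forall>x. x \<notin> {c..d} \<longrightarrow> \<phi> x = 0))"

definition L2_on :: "real set \<Rightarrow> (real \<Rightarrow> real) \<Rightarrow> bool" where
  "L2_on S f \<longleftrightarrow> set_borel_measurable lebesgue S f \<and> set_integrable lebesgue S (\<lambda>t. (f t)\<^sup>2)"

definition H1_weak_deriv :: "real \<Rightarrow> real \<Rightarrow> (real \<Rightarrow> real) \<Rightarrow> (real \<Rightarrow> real) \<Rightarrow> bool" where
  "H1_weak_deriv a b f g \<longleftrightarrow> L2_on {a<..<b} f \<and> L2_on {a<..<b} g \<and>
     (\<forall>\<phi> D. test_fun a b \<phi> D \<longrightarrow>
        (\<integral>t\<in>{a<..<b}. f t * D 1 t \<partial>lebesgue) = - (\<integral>t\<in>{a<..<b}. g t * \<phi> t \<partial>lebesgue))"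

definition H1loc_deriv :: "real set \<Rightarrow> (real \<Rightarrow> 'v \<Rightarrow> real) \<Rightarrow> (real \<Rightarrow> 'v \<Rightarrow> real) \<Rightarrow> bool" where
  "H1loc_deriv T u u' \<longleftrightarrow>
     (\<forall>a\<in>T. \<forall>b\<in>T. a < b \<longrightarrow> (\<forall>i. H1_weak_deriv a b (\<lambda>t. u t i) (\<lambda>t. u' t i)))"

definition mc_dobs_AC_solution ::
  "('v::finite \<Rightarrow> 'v \<Rightarrow> real) \<Rightarrow> real \<Rightarrow> real \<Rightarrow> real set \<Rightarrow> (real \<Rightarrow> 'v \<Rightarrow> real) \<Rightarrow> (real \<Rightarrow> 'v \<Rightarrow> real) \<Rightarrow> bool" where
  "mc_dobs_AC_solution w r \<epsilon> T u \<beta> \<longleftrightarrow>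
     (\<forall>t\<in>T. u t \<in> Vbox) \<and> continuous_on T u \<and>
     (\<exists>u'. H1loc_deriv T u u' \<and>
        (AE t in lebesgue. t \<in> T \<longrightarrow>
           (\<forall>i. \<epsilon> * u' t i + \<epsilon> * lap w r (u t) i - u t i + avg w r (u t)
                 = \<beta> t i - avg w r (\<beta> t)) \<and>
           \<beta> t \<in> Bset (u t)))"

end

(*
  At almost every time the flow equation only involves the pair (u(t), u'(t)) and a multiplier
  beta(t) that may be chosen pointwise. For a state x in the box, write a for the residual
  eps v + eps Lap x - x + avg x. Subtracting the average of beta means that the equation is
  solvable iff a has zero mass and a + c lies in B(x) for some constant c. By the discrete Green
  identity <grad x, grad eta - grad x>_E = <Lap x, eta - x>_V, the variational inequality is
  <a, eta - x>_V >= 0 for all eta in the box with the mass of x, i.e. x minimises the linear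
  functional <a, .>_V on that set. Its KKT condition is again that a + c lies in B(x) for some c;
  necessity follows by moving mass between two vertices. Zero mass of a is zero mass of v, because the Laplacian has
  zero mass. Finally, the weak derivative in the definition of a solution agrees almost
  everywhere with u' by the fundamental lemma of the calculus of variations, which is proved
  with smooth cutoffs built from exp(-1/x).
*)

theory Submission
  imports Defs
begin

section \<open>Smooth cutoff functions\<close>

definition flat_exp :: "nat \<Rightarrow> real \<Rightarrow> real" where
  "flat_exp n x = (if 0 < x then exp (- inverse x) * inverse x ^ n else 0)"

lemma flat_exp_nonneg: "0 \<le> flat_exp n x"
  by (simp add: flat_exp_def)

lemma flat_exp_pos: "0 < x \<Longrightarrow> 0 < flat_exp n x"
  by (simp add: flat_exp_def)

lemma has_real_derivative_flat_exp_0: "(flat_exp n has_real_derivative 0) (at 0)"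
proof -
  have right: "((\<lambda>y. (flat_exp n y - flat_exp n 0) / (y - 0)) \<longlongrightarrow> 0) (at_right 0)"
  proof (rule Lim_transform_eventually)
    show "((\<lambda>y. inverse y ^ Suc n / exp (inverse y)) \<longlongrightarrow> 0) (at_right (0::real))"
      by (rule filterlim_compose[OF tendsto_power_div_exp_0 filterlim_inverse_at_top_right])
    show "\<forall>\<^sub>F y in at_right 0. inverse y ^ Suc n / exp (inverse y) = (flat_exp n y - flat_exp n 0) / (y - 0)"
      using eventually_at_right_less[of "0::real"]
      by eventually_elim (auto simp: flat_exp_def exp_minus field_simps)
  qed
  have left: "((\<lambda>y. (flat_exp n y - flat_exp n 0) / (y - 0)) \<longlongrightarrow> 0) (at_left 0)"
  proof (rule Lim_transform_eventually[OF tendsto_const])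
    show "\<forall>\<^sub>F y in at_left 0. 0 = (flat_exp n y - flat_exp n 0) / (y - 0)"
      using eventually_at_left_real[of "-1" 0, simplified] by eventually_elim (auto simp: flat_exp_def)
  qed
  from left right show ?thesis
    by (simp add: has_field_derivative_iff filterlim_at_split)
qed

lemma has_real_derivative_flat_exp:
  "(flat_exp n has_real_derivative flat_exp (n + 2) x - real n * flat_exp (n + 1) x) (at x)"
proof (cases x "0 :: real" rule: linorder_cases)
  case less
  have "(flat_exp n has_real_derivative 0) (at x)"
    by (rule has_field_derivative_transform_within_open[of "\<lambda>_. 0" 0 x "{..<0}"])
       (use less in \<open>auto simp: flat_exp_def\<close>)
  then show ?thesis
    using less by (simp add: flat_exp_def)
next
  case equal
  then show ?thesis
    using has_real_derivative_flat_exp_0 by (simp add: flat_exp_def)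
next
  case greater
  have "((\<lambda>y. exp (- inverse y) * inverse y ^ n) has_real_derivative
      exp (- inverse x) * inverse x ^ 2 * inverse x ^ n
      - exp (- inverse x) * (real n * inverse x ^ (n - 1) * inverse x ^ 2)) (at x)"
    using greater by (auto intro!: derivative_eq_intros simp: power2_eq_square)
  also have "exp (- inverse x) * inverse x ^ 2 * inverse x ^ n
      - exp (- inverse x) * (real n * inverse x ^ (n - 1) * inverse x ^ 2)
    = flat_exp (n + 2) x - real n * flat_exp (n + 1) x"
    using greater by (cases n) (simp_all add: flat_exp_def power2_eq_square algebra_simps)
  finally show ?thesis
    by (rule has_field_derivative_transform_within_open[where S = "{0<..}"])
       (use greater in \<open>auto simp: flat_exp_def\<close>)
qed

inductive_set fun_algebra :: "(real \<Rightarrow> real) set \<Rightarrow> (real \<Rightarrow> real) set" for F where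
  generator: "f \<in> F \<Longrightarrow> f \<in> fun_algebra F"
| const: "(\<lambda>x. c) \<in> fun_algebra F"
| add: "f \<in> fun_algebra F \<Longrightarrow> g \<in> fun_algebra F \<Longrightarrow> (\<lambda>x. f x + g x) \<in> fun_algebra F"
| mult: "f \<in> fun_algebra F \<Longrightarrow> g \<in> fun_algebra F \<Longrightarrow> (\<lambda>x. f x * g x) \<in> fun_algebra F"

lemma fun_algebra_has_derivative:
  assumes F: "\<And>f. f \<in> F \<Longrightarrow> \<exists>f'\<in>fun_algebra F. \<forall>x. (f has_real_derivative f' x) (at x)"
  shows "f \<in> fun_algebra F \<Longrightarrow> \<exists>f'\<in>fun_algebra F. \<forall>x. (f has_real_derivative f' x) (at x)"
proof (induction rule: fun_algebra.induct)
  case (generator f)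
  then show ?case by (rule F)
next
  case (const c)
  show ?case
    by (intro bexI[of _ "\<lambda>x. 0"] fun_algebra.const) auto
next
  case (add f g)
  then obtain f' g' where "f' \<in> fun_algebra F" "g' \<in> fun_algebra F"
    and "\<forall>x. (f has_real_derivative f' x) (at x)" "\<forall>x. (g has_real_derivative g' x) (at x)"
    by blast
  then show ?case
    by (intro bexI[of _ "\<lambda>x. f' x + g' x"] fun_algebra.add) (auto intro: derivative_eq_intros)
next
  case (mult f g)
  then obtain f' g' where "f' \<in> fun_algebra F" "g' \<in> fun_algebra F"
    and "\<forall>x. (f has_real_derivative f' x) (at x)" "\<forall>x. (g has_real_derivative g' x) (at x)"
    by blast
  then show ?case
    using mult.hyps
    by (intro bexI[of _ "\<lambda>x. f' x * g x + g' x * f x"] fun_algebra.add fun_algebra.mult)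
       (auto intro: DERIV_mult)
qed

lemma fun_algebra_smooth:
  assumes F: "\<And>f. f \<in> F \<Longrightarrow> \<exists>f'\<in>fun_algebra F. \<forall>x. (f has_real_derivative f' x) (at x)"
    and f: "f \<in> fun_algebra F"
  shows "\<exists>D. smooth_fun f D"
proof -
  define deriv_of where
    "deriv_of g = (SOME g'. g' \<in> fun_algebra F \<and> (\<forall>x. (g has_real_derivative g' x) (at x)))" for g
  have deriv_of: "deriv_of g \<in> fun_algebra F \<and> (\<forall>x. (g has_real_derivative deriv_of g x) (at x))"
    if "g \<in> fun_algebra F" for g
    unfolding deriv_of_def using fun_algebra_has_derivative[OF F that] by (rule someI2_bex) blast
  define D where "D k = (deriv_of ^^ k) f" for k
  have "D k \<in> fun_algebra F" for k
    by (induction k) (auto simp: D_def f deriv_of)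
  then have "smooth_fun f D"
    using deriv_of by (simp add: smooth_fun_def D_def)
  then show ?thesis
    by blast
qed

text \<open>The generated algebra is closed under differentiation and contains every \<open>cutoff\<close> below.\<close>
definition step_generators :: "(real \<Rightarrow> real) set" where
  "step_generators =
     {(\<lambda>x. flat_exp n (\<alpha> * x + \<beta>)) | n \<alpha> \<beta>. True} \<union>
     {(\<lambda>x. inverse (flat_exp 0 (\<alpha> * x + \<beta>) + flat_exp 0 (1 - (\<alpha> * x + \<beta>)))) | \<alpha> \<beta>. True}"

lemma flat_exp_affine_in_fun_algebra:
  "(\<lambda>x. flat_exp n (\<alpha> * x + \<beta>)) \<in> fun_algebra step_generators"
  by (rule fun_algebra.generator) (auto simp: step_generators_def)

lemma inverse_flat_exp_sum_in_fun_algebra: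
  "(\<lambda>x. inverse (flat_exp 0 (\<alpha> * x + \<beta>) + flat_exp 0 (1 - (\<alpha> * x + \<beta>)))) \<in> fun_algebra step_generators"
  by (rule fun_algebra.generator) (auto simp: step_generators_def)

lemma flat_exp_sum_pos: "0 < flat_exp 0 y + flat_exp 0 (1 - y)"
  using flat_exp_pos[of y 0] flat_exp_pos[of "1 - y" 0] flat_exp_nonneg[of 0 y] flat_exp_nonneg[of 0 "1 - y"]
  by (cases "0 < y") auto

lemma has_real_derivative_flat_exp_affine:
  "((\<lambda>x. flat_exp n (\<alpha> * x + \<beta>)) has_real_derivative
     (flat_exp (n + 2) (\<alpha> * x + \<beta>) - real n * flat_exp (n + 1) (\<alpha> * x + \<beta>)) * \<alpha>) (at x)"
  by (rule DERIV_chain2[OF has_real_derivative_flat_exp]) (auto intro!: derivative_eq_intros)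

lemma flat_exp_affine_derivative_in_fun_algebra:
  "\<exists>f'\<in>fun_algebra step_generators. \<forall>x. ((\<lambda>x. flat_exp n (\<alpha> * x + \<beta>)) has_real_derivative f' x) (at x)"
proof -
  let ?f' = "\<lambda>x. (flat_exp (n + 2) (\<alpha> * x + \<beta>) + (\<lambda>_. - real n) x * flat_exp (n + 1) (\<alpha> * x + \<beta>))
                 * (\<lambda>_. \<alpha>) x"
  have "?f' \<in> fun_algebra step_generators"
    by (intro fun_algebra.mult fun_algebra.add fun_algebra.const flat_exp_affine_in_fun_algebra)
  moreover have "((\<lambda>x. flat_exp n (\<alpha> * x + \<beta>)) has_real_derivative ?f' x) (at x)" for x
    using has_real_derivative_flat_exp_affine[of n \<alpha> \<beta> x] by simp
  ultimately show ?thesis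
    by (intro bexI[of _ ?f']) auto
qed

lemma inverse_flat_exp_sum_derivative_in_fun_algebra:
  fixes \<alpha> \<beta> :: real
  defines "f \<equiv> \<lambda>x. inverse (flat_exp 0 (\<alpha> * x + \<beta>) + flat_exp 0 (1 - (\<alpha> * x + \<beta>)))"
  shows "\<exists>f'\<in>fun_algebra step_generators. \<forall>x. (f has_real_derivative f' x) (at x)"
proof -
  define den where "den = (\<lambda>x. flat_exp 0 (\<alpha> * x + \<beta>) + flat_exp 0 (- \<alpha> * x + (1 - \<beta>)))"
  define den' where "den' = (\<lambda>x. flat_exp 2 (\<alpha> * x + \<beta>) * \<alpha> + flat_exp 2 (- \<alpha> * x + (1 - \<beta>)) * - \<alpha>)"
  have f_den: "f = (\<lambda>x. inverse (den x))"
    by (simp add: f_def den_def algebra_simps)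
  have den_deriv: "(den has_real_derivative den' x) (at x)" for x
    using DERIV_add[OF has_real_derivative_flat_exp_affine[of 0 \<alpha> \<beta> x]
        has_real_derivative_flat_exp_affine[of 0 "- \<alpha>" "1 - \<beta>" x]]
    by (simp add: den_def den'_def numeral_2_eq_2)
  have den_nonzero: "den x \<noteq> 0" for x
    using flat_exp_sum_pos[of "\<alpha> * x + \<beta>"] by (simp add: den_def add.commute diff_diff_eq)
  have "(f has_real_derivative - (den' x * inverse (den x ^ Suc (Suc 0)))) (at x)" for x
    unfolding f_den by (rule DERIV_inverse_fun[OF den_deriv den_nonzero])
  then have "(f has_real_derivative (\<lambda>_. -1) x * den' x * (f x * f x)) (at x)" for x
    by (simp add: f_den power2_eq_square)
  moreover have "(\<lambda>x. (\<lambda>_. -1) x * den' x * (f x * f x)) \<in> fun_algebra step_generators"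
    (is "?f' \<in> _")
    unfolding den'_def f_def
    by (intro fun_algebra.mult fun_algebra.add fun_algebra.const flat_exp_affine_in_fun_algebra
        inverse_flat_exp_sum_in_fun_algebra)
  ultimately show ?thesis
    by (intro bexI[of _ ?f']) auto
qed

lemma step_generators_has_derivative:
  assumes "f \<in> step_generators"
  shows "\<exists>f'\<in>fun_algebra step_generators. \<forall>x. (f has_real_derivative f' x) (at x)"
  using assms[unfolded step_generators_def]
    flat_exp_affine_derivative_in_fun_algebra inverse_flat_exp_sum_derivative_in_fun_algebra
  by blast

definition smooth_step :: "real \<Rightarrow> real" where
  "smooth_step y = flat_exp 0 y / (flat_exp 0 y + flat_exp 0 (1 - y))"

lemma smooth_step_nonpos: "y \<le> 0 \<Longrightarrow> smooth_step y = 0"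
  by (simp add: smooth_step_def flat_exp_def)

lemma smooth_step_ge_one: "1 \<le> y \<Longrightarrow> smooth_step y = 1"
  by (simp add: smooth_step_def flat_exp_def)

lemma smooth_step_bounds: "0 \<le> smooth_step y" "smooth_step y \<le> 1"
  using flat_exp_sum_pos[of y] flat_exp_nonneg[of 0 y] flat_exp_nonneg[of 0 "1 - y"]
  by (simp_all add: smooth_step_def field_simps)

text \<open>A smooth function with support in \<open>[c + 1/(n+1), b - 1/(n+1)]\<close> that equals \<open>1\<close> on
  \<open>[c + 2/(n+1), b - 2/(n+1)]\<close>.\<close>
definition cutoff :: "real \<Rightarrow> real \<Rightarrow> nat \<Rightarrow> real \<Rightarrow> real" where
  "cutoff c b n x = smooth_step (real (Suc n) * (x - c) - 1) * smooth_step (real (Suc n) * (b - x) - 1)"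

lemma cutoff_smooth: "\<exists>D. smooth_fun (cutoff c b n) D"
proof (rule fun_algebra_smooth[OF step_generators_has_derivative])
  let ?N = "real (Suc n)"
  have "cutoff c b n =
      (\<lambda>x. (flat_exp 0 (?N * x + (- ?N * c - 1))
             * inverse (flat_exp 0 (?N * x + (- ?N * c - 1)) + flat_exp 0 (1 - (?N * x + (- ?N * c - 1)))))
          * (flat_exp 0 (- ?N * x + (?N * b - 1))
             * inverse (flat_exp 0 (- ?N * x + (?N * b - 1)) + flat_exp 0 (1 - (- ?N * x + (?N * b - 1))))))"
    by (simp add: fun_eq_iff cutoff_def smooth_step_def divide_inverse algebra_simps)
  also have "\<dots> \<in> fun_algebra step_generators"
    by (intro fun_algebra.mult flat_exp_affine_in_fun_algebra inverse_flat_exp_sum_in_fun_algebra)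
  finally show "cutoff c b n \<in> fun_algebra step_generators" .
qed

lemma cutoff_bounds: "0 \<le> cutoff c b n x" "cutoff c b n x \<le> 1"
  unfolding cutoff_def using smooth_step_bounds by (simp_all add: mult_le_one)

lemma cutoff_test_fun:
  assumes "a \<le> c"
  shows "\<exists>D. test_fun a b (cutoff c b n) D"
proof -
  let ?N = "real (Suc n)"
  have "cutoff c b n x = 0" if "x \<notin> {c + 1 / ?N .. b - 1 / ?N}" for x
  proof -
    have "?N * (x - c) - 1 \<le> 0 \<or> ?N * (b - x) - 1 \<le> 0"
      using that by (auto simp: field_simps)
    then show ?thesis
      by (auto simp: cutoff_def smooth_step_nonpos)
  qed
  moreover have "0 < 1 / ?N"
    by simp
  then have "a < c + 1 / ?N" "b - 1 / ?N < b"
    using assms by linarith+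
  ultimately show ?thesis
    using cutoff_smooth unfolding test_fun_def by blast
qed

lemma cutoff_tendsto_indicator: "(\<lambda>n. cutoff c b n x) \<longlonglongrightarrow> indicator {c<..<b} x"
proof (cases "c < x \<and> x < b")
  case True
  have "filterlim (\<lambda>n. real (Suc n) * d) at_top sequentially" if "0 < d" for d
    using that by (intro filterlim_at_top_mult_tendsto_pos[OF tendsto_const]
        filterlim_compose[OF filterlim_real_sequentially filterlim_Suc])
  then have "\<forall>\<^sub>F n in sequentially. 2 \<le> real (Suc n) * (x - c) \<and> 2 \<le> real (Suc n) * (b - x)"
    using True by (intro eventually_conj) (simp_all add: filterlim_at_top)
  then have "\<forall>\<^sub>F n in sequentially. cutoff c b n x = 1"
    by eventually_elim (simp add: cutoff_def smooth_step_ge_one)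
  then show ?thesis
    using True by (simp add: tendsto_eventually)
next
  case False
  then have "x - c \<le> 0 \<or> b - x \<le> 0"
    by auto
  have "cutoff c b n x = 0" for n
  proof -
    have "real (Suc n) * (x - c) - 1 \<le> 0 \<or> real (Suc n) * (b - x) - 1 \<le> 0"
      using \<open>x - c \<le> 0 \<or> b - x \<le> 0\<close>
      by (metis diff_le_0_iff_le mult_nonneg_nonpos of_nat_0_le_iff order_trans zero_le_one)
    then show ?thesis
      by (auto simp: cutoff_def smooth_step_nonpos)
  qed
  then show ?thesis
    using False by simp
qed

section \<open>Uniqueness of weak derivatives\<close>

lemma emeasure_density_max_0_greaterThan:
  fixes h :: "real \<Rightarrow> real"
  assumes "integrable lborel h"
  shows "emeasure (density lborel (\<lambda>x. ennreal (max 0 (h x)))) {y<..}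
      = ennreal (\<integral>x\<in>{y<..}. max 0 (h x) \<partial>lborel)"
proof -
  have [measurable]: "h \<in> borel_measurable borel"
    using assms by auto
  have "integrable lborel (\<lambda>x. max 0 (h x))"
    using assms by (auto intro: integrable_max)
  then have int: "integrable lborel (\<lambda>x. indicator {y<..} x * max 0 (h x))"
    using integrable_mult_indicator[of "{y<..}" lborel "\<lambda>x. max 0 (h x)"] by (simp add: real_scaleR_def)
  have "emeasure (density lborel (\<lambda>x. ennreal (max 0 (h x)))) {y<..}
      = (\<integral>\<^sup>+x. ennreal (indicator {y<..} x * max 0 (h x)) \<partial>lborel)"
    by (subst emeasure_density) (auto intro!: nn_integral_cong simp: indicator_def)
  also have "\<dots> = ennreal (\<integral>x\<in>{y<..}. max 0 (h x) \<partial>lborel)"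
    unfolding set_lebesgue_integral_def real_scaleR_def using int
    by (intro nn_integral_eq_integral) auto
  finally show ?thesis .
qed

text \<open>The positive and negative parts of \<open>f\<close> are densities of two finite measures that agree
  on all half-lines \<open>{y<..}\<close>, so the measures and hence the densities coincide.\<close>
lemma AE_zero_if_integrals_greaterThan_vanish:
  fixes f :: "real \<Rightarrow> real"
  assumes f: "integrable lborel f" and zero: "\<And>y. (\<integral>x\<in>{y<..}. f x \<partial>lborel) = 0"
  shows "AE x in lborel. f x = 0"
proof -
  define P where "P = (\<lambda>x. ennreal (max 0 (f x)))"
  define N where "N = (\<lambda>x. ennreal (max 0 (- f x)))"
  have [measurable]: "f \<in> borel_measurable borel"
    using f by auto
  have [measurable]: "P \<in> borel_measurable borel" "N \<in> borel_measurable borel"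
    unfolding P_def N_def by measurable
  have int_P: "integrable lborel (\<lambda>x. max 0 (f x))" and int_N: "integrable lborel (\<lambda>x. max 0 (- f x))"
    using f by (auto intro: integrable_max)
  have "(\<integral>x\<in>{y<..}. max 0 (f x) \<partial>lborel) = (\<integral>x\<in>{y<..}. max 0 (- f x) \<partial>lborel)" for y
  proof -
    have "set_integrable lborel {y<..} (\<lambda>x. max 0 (f x))" "set_integrable lborel {y<..} (\<lambda>x. max 0 (- f x))"
      unfolding set_integrable_def
      by (rule integrable_mult_indicator; simp add: int_P int_N)+
    then have "(\<integral>x\<in>{y<..}. max 0 (f x) \<partial>lborel) - (\<integral>x\<in>{y<..}. max 0 (- f x) \<partial>lborel)
        = (\<integral>x\<in>{y<..}. max 0 (f x) - max 0 (- f x) \<partial>lborel)"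
      by (rule set_integral_diff(2)[symmetric])
    also have "\<dots> = 0"
      using zero[of y] by (simp add: max_def if_distrib[of "\<lambda>t. t - _"] cong: if_cong)
    finally show ?thesis
      by simp
  qed
  then have "density lborel P = density lborel N"
    unfolding P_def N_def
    by (intro measure_eqI_lessThan) (simp_all add: emeasure_density_max_0_greaterThan f integrable_minus)
  then have "AE x in lborel. P x = N x"
    by (subst (asm) finite_density_unique) (simp_all add: P_def nn_integral_eq_integral[OF int_P])
  then show ?thesis
    by eventually_elim (auto simp: P_def N_def max_def split: if_splits)
qed

lemma AE_lebesgue_zero_if_integrals_greaterThan_vanish:
  fixes f :: "real \<Rightarrow> real"
  assumes f: "integrable lebesgue f" and zero: "\<And>y. (\<integral>x\<in>{y<..}. f x \<partial>lebesgue) = 0"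
  shows "AE x in lebesgue. f x = 0"
proof -
  have "f \<in> borel_measurable (completion lborel)"
    using f by auto
  then obtain f' where f'_borel[measurable]: "f' \<in> borel_measurable lborel"
    and "AE x in lborel. f x = f' x"
    using completion_ex_borel_measurable_real by blast
  then have f_f': "AE x in lebesgue. f x = f' x"
    by (intro AE_completion)
  have "integrable lebesgue f'"
    using f f_f' by (rule integrable_cong_AE_imp[OF _ measurable_completion[OF f'_borel]])
  then have "integrable lborel f'"
    by (simp add: integrable_completion)
  moreover have "(\<integral>x\<in>{y<..}. f' x \<partial>lborel) = 0" for y
  proof -
    have "(\<integral>x\<in>{y<..}. f' x \<partial>lborel) = (\<integral>x\<in>{y<..}. f' x \<partial>lebesgue)"
      unfolding set_lebesgue_integral_def by (rule integral_completion[symmetric]) simp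
    also have "\<dots> = (\<integral>x\<in>{y<..}. f x \<partial>lebesgue)"
      using f f_f' by (intro set_lebesgue_integral_cong_AE) (auto simp: measurable_completion)
    finally show ?thesis
      using zero by simp
  qed
  ultimately have "AE x in lborel. f' x = 0"
    by (rule AE_zero_if_integrals_greaterThan_vanish)
  then have "AE x in lebesgue. f' x = 0"
    by (rule AE_completion)
  with f_f' show ?thesis
    by eventually_elim simp
qed

lemma L2_on_imp_set_integrable:
  assumes "L2_on {a<..<b} g"
  shows "set_integrable lebesgue {a<..<b} g"
proof (rule set_integrable_bound)
  have "set_integrable lebesgue {a<..<b} (\<lambda>_. 1 :: real)"
    using absolutely_integrable_continuous_real[of a b "\<lambda>_. 1"] by (rule set_integrable_subset) auto
  then show "set_integrable lebesgue {a<..<b} (\<lambda>x. 1 + (g x)\<^sup>2)"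
    using assms unfolding L2_on_def by (intro set_integral_add(1)) auto
  show "set_borel_measurable lebesgue {a<..<b} g"
    using assms by (simp add: L2_on_def)
  have "\<bar>y\<bar> \<le> 1 + y\<^sup>2" for y :: real
  proof -
    have "0 \<le> (\<bar>y\<bar> - 1)\<^sup>2"
      by simp
    then show ?thesis
      by (simp add: power2_eq_square algebra_simps)
  qed
  then show "AE x in lebesgue. x \<in> {a<..<b} \<longrightarrow> norm (g x) \<le> norm (1 + (g x)\<^sup>2)"
    by simp
qed

lemma test_fun_continuous:
  assumes "test_fun a b \<phi> D"
  shows "continuous_on UNIV \<phi>"
proof -
  have "D 0 = \<phi>" and "\<And>x. (D 0 has_real_derivative D (Suc 0) x) (at x)"
    using assms unfolding test_fun_def smooth_fun_def by auto
  then show ?thesis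
    by (metis DERIV_isCont continuous_at_imp_continuous_on)
qed

lemma set_integrable_mult_test_fun:
  assumes g: "set_integrable lebesgue {a<..<b} g" and \<phi>: "test_fun a b \<phi> D"
  shows "set_integrable lebesgue {a<..<b} (\<lambda>t. g t * \<phi> t)"
proof -
  have cont: "continuous_on UNIV \<phi>"
    using \<phi> by (rule test_fun_continuous)
  have "bounded (\<phi> ` {a..b})"
    using cont by (intro compact_imp_bounded compact_continuous_image) (auto intro: continuous_on_subset)
  then have "bounded (\<phi> ` {a<..<b})"
    by (rule bounded_subset) auto
  moreover have "\<phi> \<in> borel_measurable (lebesgue_on {a<..<b})"
    using cont by (intro continuous_imp_measurable_on_sets_lebesgue) (auto intro: continuous_on_subset)
  ultimately have "set_integrable lebesgue {a<..<b} (\<lambda>t. \<phi> t * g t)"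
    using g by (intro absolutely_integrable_bounded_measurable_product_real) auto
  then show ?thesis
    by (simp add: mult.commute)
qed

lemma set_integral_tail_eq_0_if_orthogonal_to_test_funs:
  fixes G :: "real \<Rightarrow> real"
  assumes G: "set_integrable lebesgue {a<..<b} G"
    and orth: "\<And>\<phi> D. test_fun a b \<phi> D \<Longrightarrow> (\<integral>x\<in>{a<..<b}. G x * \<phi> x \<partial>lebesgue) = 0"
    and "a \<le> c"
  shows "(\<integral>x\<in>{c<..<b}. G x \<partial>lebesgue) = 0"
proof -
  define s where "s = (\<lambda>n x. indicator {a<..<b} x * (G x * cutoff c b n x))"
  have integrable_s: "integrable lebesgue (s n)" and integral_s: "integral\<^sup>L lebesgue (s n) = 0" for n
  proof -
    obtain D where "test_fun a b (cutoff c b n) D"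
      using cutoff_test_fun[OF \<open>a \<le> c\<close>] by blast
    then show "integrable lebesgue (s n)" "integral\<^sup>L lebesgue (s n) = 0"
      using set_integrable_mult_test_fun[OF G] orth
      by (simp_all add: s_def set_integrable_def set_lebesgue_integral_def)
  qed
  have G_int: "integrable lebesgue (\<lambda>x. indicator {a<..<b} x * G x)"
    using G by (simp add: set_integrable_def)
  have "(\<lambda>n. integral\<^sup>L lebesgue (s n)) \<longlonglongrightarrow> (\<integral>x. indicator {c<..<b} x * G x \<partial>lebesgue)"
  proof (rule integral_dominated_convergence)
    have "set_integrable lebesgue {c<..<b} G"
      using G by (rule set_integrable_subset) (use \<open>a \<le> c\<close> in auto)
    then show "(\<lambda>x. indicator {c<..<b} x * G x) \<in> borel_measurable lebesgue"
      by (simp add: set_integrable_def borel_measurable_integrable)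
    show "integrable lebesgue (\<lambda>x. norm (indicator {a<..<b} x * G x))"
      using G_int by (rule integrable_norm)
    show "AE x in lebesgue. (\<lambda>n. s n x) \<longlonglongrightarrow> indicator {c<..<b} x * G x"
    proof (intro AE_I2)
      fix x
      have "indicator {a<..<b} x * (G x * indicator {c<..<b} x) = indicator {c<..<b} x * G x"
        using \<open>a \<le> c\<close> by (simp add: indicator_def)
      moreover have "(\<lambda>n. s n x) \<longlonglongrightarrow> indicator {a<..<b} x * (G x * indicator {c<..<b} x)"
        unfolding s_def by (intro tendsto_mult tendsto_const cutoff_tendsto_indicator)
      ultimately show "(\<lambda>n. s n x) \<longlonglongrightarrow> indicator {c<..<b} x * G x"
        by (simp only:)
    qed
    show "AE x in lebesgue. norm (s n x) \<le> norm (indicator {a<..<b} x * G x)" for n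
    proof (intro AE_I2)
      fix x
      have "\<bar>G x\<bar> * cutoff c b n x \<le> \<bar>G x\<bar>"
        using cutoff_bounds[of c b n x] by (simp add: mult_left_le)
      then show "norm (s n x) \<le> norm (indicator {a<..<b} x * G x)"
        using cutoff_bounds[of c b n x] by (simp add: s_def abs_mult indicator_def)
    qed
  qed (use integrable_s in auto)
  then show ?thesis
    unfolding integral_s set_lebesgue_integral_def by (simp add: LIMSEQ_const_iff)
qed

lemma AE_zero_if_orthogonal_to_test_funs:
  fixes G :: "real \<Rightarrow> real"
  assumes G: "set_integrable lebesgue {a<..<b} G"
    and orth: "\<And>\<phi> D. test_fun a b \<phi> D \<Longrightarrow> (\<integral>x\<in>{a<..<b}. G x * \<phi> x \<partial>lebesgue) = 0"
  shows "AE x in lebesgue. x \<in> {a<..<b} \<longrightarrow> G x = 0"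
proof -
  have "AE x in lebesgue. indicator {a<..<b} x * G x = 0"
  proof (rule AE_lebesgue_zero_if_integrals_greaterThan_vanish)
    show "integrable lebesgue (\<lambda>x. indicator {a<..<b} x * G x)"
      using G by (simp add: set_integrable_def)
    fix y
    have "(\<integral>x\<in>{y<..}. indicator {a<..<b} x * G x \<partial>lebesgue) = (\<integral>x\<in>{max a y<..<b}. G x \<partial>lebesgue)"
      unfolding set_lebesgue_integral_def by (intro Bochner_Integration.integral_cong) (auto simp: indicator_def)
    also have "\<dots> = 0"
      using set_integral_tail_eq_0_if_orthogonal_to_test_funs[OF G orth] by simp
    finally show "(\<integral>x\<in>{y<..}. indicator {a<..<b} x * G x \<partial>lebesgue) = 0" .
  qed
  then show ?thesis
    by eventually_elim (simp add: indicator_def)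
qed

lemma H1_weak_deriv_unique:
  assumes g1: "H1_weak_deriv a b f g1" and g2: "H1_weak_deriv a b f g2"
  shows "AE x in lebesgue. x \<in> {a<..<b} \<longrightarrow> g1 x = g2 x"
proof -
  have int1: "set_integrable lebesgue {a<..<b} g1" and int2: "set_integrable lebesgue {a<..<b} g2"
    using g1 g2 by (simp_all add: H1_weak_deriv_def L2_on_imp_set_integrable)
  have "AE x in lebesgue. x \<in> {a<..<b} \<longrightarrow> g1 x - g2 x = 0"
  proof (rule AE_zero_if_orthogonal_to_test_funs)
    show "set_integrable lebesgue {a<..<b} (\<lambda>x. g1 x - g2 x)"
      using int1 int2 by (rule set_integral_diff(1))
    fix \<phi> D
    assume \<phi>: "test_fun a b \<phi> D"
    have "(\<integral>x\<in>{a<..<b}. (g1 x - g2 x) * \<phi> x \<partial>lebesgue)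
        = (\<integral>x\<in>{a<..<b}. g1 x * \<phi> x \<partial>lebesgue) - (\<integral>x\<in>{a<..<b}. g2 x * \<phi> x \<partial>lebesgue)"
      unfolding left_diff_distrib
      by (intro set_integral_diff(2) set_integrable_mult_test_fun[OF _ \<phi>] int1 int2)
    also have "\<dots> = 0"
    proof -
      have "(\<integral>t\<in>{a<..<b}. f t * D 1 t \<partial>lebesgue) = - (\<integral>x\<in>{a<..<b}. g1 x * \<phi> x \<partial>lebesgue)"
        "(\<integral>t\<in>{a<..<b}. f t * D 1 t \<partial>lebesgue) = - (\<integral>x\<in>{a<..<b}. g2 x * \<phi> x \<partial>lebesgue)"
        using g1 g2 \<phi> unfolding H1_weak_deriv_def by blast+
      then show ?thesis
        by simp
    qed
    finally show "(\<integral>x\<in>{a<..<b}. (g1 x - g2 x) * \<phi> x \<partial>lebesgue) = 0" .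
  qed
  then show ?thesis
    by eventually_elim simp
qed

lemma is_interval_rational_bounds:
  fixes T :: "real set"
  assumes T: "is_interval T" and t: "t \<in> T" "t \<noteq> Inf T" "t \<noteq> Sup T"
  obtains p q where "p \<in> \<rat>" "q \<in> \<rat>" "p \<in> T" "q \<in> T" "p < t" "t < q"
proof -
  obtain s1 where "s1 \<in> T" "s1 < t"
    using t cInf_eq_minimum[of t T] by (metis not_less)
  obtain s2 where "s2 \<in> T" "t < s2"
    using t cSup_eq_maximum[of t T] by (metis not_less)
  obtain p where p: "p \<in> \<rat>" "s1 < p" "p < t"
    using Rats_dense_in_real[OF \<open>s1 < t\<close>] by blast
  obtain q where q: "q \<in> \<rat>" "t < q" "q < s2"
    using Rats_dense_in_real[OF \<open>t < s2\<close>] by blast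
  have "p \<in> T" "q \<in> T"
    using T \<open>s1 \<in> T\<close> \<open>s2 \<in> T\<close> t(1) p q unfolding is_interval_1 by (meson less_imp_le)+
  with p q that show ?thesis
    by blast
qed

text \<open>Apart from its endpoints, \<open>T\<close> is covered by the countably many open intervals with
  rational endpoints in \<open>T\<close>.\<close>
lemma H1loc_deriv_unique:
  fixes u u1 u2 :: "real \<Rightarrow> 'v::finite \<Rightarrow> real"
  assumes T: "is_interval T" and u1: "H1loc_deriv T u u1" and u2: "H1loc_deriv T u u2"
  shows "AE t in lebesgue. t \<in> T \<longrightarrow> u1 t = u2 t"
proof -
  define Q where "Q = {(p, q). p \<in> \<rat> \<and> q \<in> \<rat> \<and> p \<in> T \<and> q \<in> T \<and> p < q}"
  have "countable Q"
    by (rule countable_subset[of _ "\<rat> \<times> \<rat>"]) (auto simp: Q_def countable_rat)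
  moreover have "AE t in lebesgue. t \<in> {p<..<q} \<longrightarrow> u1 t = u2 t" if "(p, q) \<in> Q" for p q
  proof -
    have "AE t in lebesgue. \<forall>i\<in>UNIV. t \<in> {p<..<q} \<longrightarrow> u1 t i = u2 t i"
    proof (rule AE_finite_allI)
      fix i
      show "AE t in lebesgue. t \<in> {p<..<q} \<longrightarrow> u1 t i = u2 t i"
        using u1 u2 that unfolding H1loc_deriv_def Q_def by (intro H1_weak_deriv_unique) auto
    qed simp
    then show ?thesis
      by eventually_elim (auto simp: fun_eq_iff)
  qed
  ultimately have "AE t in lebesgue. \<forall>(p, q)\<in>Q. t \<in> {p<..<q} \<longrightarrow> u1 t = u2 t"
    by (subst AE_ball_countable) auto
  moreover have "AE t in lebesgue. t \<notin> {Inf T, Sup T}"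
    by (intro AE_completion AE_not_in countable_imp_null_set_lborel) simp
  ultimately show ?thesis
  proof eventually_elim
    case (elim t)
    show ?case
    proof
      assume "t \<in> T"
      then obtain p q where "p \<in> \<rat>" "q \<in> \<rat>" "p \<in> T" "q \<in> T" "p < t" "t < q"
        using is_interval_rational_bounds[OF T] elim(2) by blast
      then have "(p, q) \<in> Q" "t \<in> {p<..<q}"
        by (simp_all add: Q_def)
      then show "u1 t = u2 t"
        using elim(1) by blast
    qed
  qed
qed

section \<open>The obstacle problem with a mass constraint on a graph\<close>

lemma deg_pos:
  fixes w :: "'v::finite \<Rightarrow> 'v \<Rightarrow> real"
  assumes "weighted_graph w" and "CARD('v) \<ge> 2"
  shows "0 < deg w i"
proof -
  obtain j :: 'v where "j \<noteq> i"
    using assms(2) by (metis card_2_iff' ex_card)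
  have "(i, j) \<in> {(a, b). 0 < w a b}\<^sup>*"
    using assms(1) by (simp add: weighted_graph_def)
  then obtain k where "0 < w i k"
    using \<open>j \<noteq> i\<close> by (cases rule: converse_rtranclE) auto
  moreover have "w i k \<le> deg w i"
    unfolding deg_def using assms(1) by (intro member_le_sum) (auto simp: weighted_graph_def)
  ultimately show ?thesis by linarith
qed

lemma mass_one_pos:
  fixes w :: "'v::finite \<Rightarrow> 'v \<Rightarrow> real"
  assumes "weighted_graph w" and "CARD('v) \<ge> 2"
  shows "0 < mass w r (\<lambda>_. 1)"
  unfolding mass_def ipV_def by (intro sum_pos) (auto simp: deg_pos[OF assms, THEN order_less_imp_not_eq2])

lemma mass_add_const:
  fixes f :: "'v::finite \<Rightarrow> real"
  shows "mass w r (\<lambda>i. f i + c) = mass w r f + c * mass w r (\<lambda>_. 1)"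
  by (simp add: mass_def ipV_def algebra_simps sum.distrib sum_distrib_left)

lemma grad_diff: "grad w (\<lambda>i. f i - g i) = (\<lambda>i j. grad w f i j - grad w g i j)"
  by (auto simp: grad_def fun_eq_iff)

text \<open>Discrete Green identity: the weights \<open>d\<^sub>i\<^sup>r\<close> of the vertex inner product cancel
  the factor \<open>d\<^sub>i\<^sup>-\<^sup>r\<close> in the Laplacian.\<close>
lemma ipE_grad_eq_ipV_lap:
  fixes w :: "'v::finite \<Rightarrow> 'v \<Rightarrow> real"
  assumes graph: "weighted_graph w" and two: "CARD('v) \<ge> 2"
  shows "ipE w (grad w x) (grad w y) = ipV w r (lap w r x) y"
proof -
  have sym: "w i j = w j i" and nonneg: "0 \<le> w i j" for i j
    using graph unfolding weighted_graph_def by blast+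
  have "grad w x i j * grad w y i j * w i j = w i j * (x i - x j) * y i + w j i * (x j - x i) * y j" for i j
    using nonneg[of i j] sym[of i j] by (auto simp: grad_def algebra_simps)
  then have "2 * ipE w (grad w x) (grad w y)
      = (\<Sum>i\<in>UNIV. \<Sum>j\<in>UNIV. w i j * (x i - x j) * y i) + (\<Sum>i\<in>UNIV. \<Sum>j\<in>UNIV. w j i * (x j - x i) * y j)"
    by (simp add: ipE_def sum.distrib)
  also have "(\<Sum>i\<in>UNIV. \<Sum>j\<in>UNIV. w j i * (x j - x i) * y j) = (\<Sum>i\<in>UNIV. \<Sum>j\<in>UNIV. w i j * (x i - x j) * y i)"
    by (rule sum.swap)
  finally have "2 * ipE w (grad w x) (grad w y) = 2 * (\<Sum>i\<in>UNIV. y i * (\<Sum>j\<in>UNIV. w i j * (x i - x j)))"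
    by (simp add: sum_distrib_left algebra_simps)
  then have "ipE w (grad w x) (grad w y) = (\<Sum>i\<in>UNIV. y i * (\<Sum>j\<in>UNIV. w i j * (x i - x j)))"
    by simp
  also have "\<dots> = ipV w r (lap w r x) y"
    unfolding ipV_def lap_def using deg_pos[OF graph two, THEN order_less_imp_not_eq2]
    by (intro sum.cong) (simp_all add: powr_minus field_simps)
  finally show ?thesis .
qed

lemma mass_lap:
  fixes w :: "'v::finite \<Rightarrow> 'v \<Rightarrow> real"
  assumes "weighted_graph w" and "CARD('v) \<ge> 2"
  shows "mass w r (lap w r x) = 0"
proof -
  have "mass w r (lap w r x) = ipE w (grad w x) (grad w (\<lambda>_. 1))"
    unfolding mass_def by (rule ipE_grad_eq_ipV_lap[OF assms, symmetric])
  also have "\<dots> = 0"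
    by (simp add: ipE_def grad_def cong: if_cong)
  finally show ?thesis .
qed

lemma exists_shifted_by_avg_iff:
  fixes a :: "'v::finite \<Rightarrow> real"
  assumes "mass w r (\<lambda>_. 1) \<noteq> 0"
  shows "(\<exists>\<beta>\<in>S. \<forall>i. a i = \<beta> i - avg w r \<beta>) \<longleftrightarrow> mass w r a = 0 \<and> (\<exists>c. (\<lambda>i. a i + c) \<in> S)"
proof
  assume "\<exists>\<beta>\<in>S. \<forall>i. a i = \<beta> i - avg w r \<beta>"
  then obtain \<beta> where "\<beta> \<in> S" and a: "a = (\<lambda>i. \<beta> i + - avg w r \<beta>)"
    by auto
  have "mass w r a = 0"
    using assms unfolding a mass_add_const by (simp add: avg_def)
  moreover have "(\<lambda>i. a i + avg w r \<beta>) \<in> S"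
    using \<open>\<beta> \<in> S\<close> by (simp add: a)
  ultimately show "mass w r a = 0 \<and> (\<exists>c. (\<lambda>i. a i + c) \<in> S)"
    by blast
next
  assume "mass w r a = 0 \<and> (\<exists>c. (\<lambda>i. a i + c) \<in> S)"
  then obtain c where "mass w r a = 0" and "(\<lambda>i. a i + c) \<in> S"
    by blast
  moreover have "avg w r (\<lambda>i. a i + c) = c"
    using \<open>mass w r a = 0\<close> assms by (simp add: avg_def mass_add_const)
  ultimately show "\<exists>\<beta>\<in>S. \<forall>i. a i = \<beta> i - avg w r \<beta>"
    by (intro bexI[of _ "\<lambda>i. a i + c"]) auto
qed

lemma Bset_multiplier_imp_variational_inequality:
  fixes a m x :: "'v::finite \<Rightarrow> real"
  assumes m: "\<And>i. 0 \<le> m i" and \<beta>: "(\<lambda>i. a i + c) \<in> Bset x"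
    and \<eta>: "\<eta> \<in> Vbox" and mass: "(\<Sum>i\<in>UNIV. \<eta> i * m i) = (\<Sum>i\<in>UNIV. x i * m i)"
  shows "0 \<le> (\<Sum>i\<in>UNIV. a i * (\<eta> i - x i) * m i)"
proof -
  have "(\<Sum>i\<in>UNIV. a i * (\<eta> i - x i) * m i)
      = (\<Sum>i\<in>UNIV. (a i + c) * (\<eta> i - x i) * m i) - c * ((\<Sum>i\<in>UNIV. \<eta> i * m i) - (\<Sum>i\<in>UNIV. x i * m i))"
    by (simp add: sum_distrib_left sum_subtractf[symmetric] sum.distrib[symmetric] algebra_simps)
  also have "\<dots> = (\<Sum>i\<in>UNIV. (a i + c) * (\<eta> i - x i) * m i)"
    using mass by simp
  also have "\<dots> \<ge> 0"
  proof (rule sum_nonneg, rule mult_nonneg_nonneg)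
    fix i
    have "x \<in> Vbox"
      using \<beta> by (auto simp: Bset_def split: if_splits)
    then have x01: "0 \<le> x i" "x i \<le> 1" and B: "x i = 0 \<Longrightarrow> 0 \<le> a i + c"
      "0 < x i \<Longrightarrow> x i < 1 \<Longrightarrow> a i + c = 0" "x i = 1 \<Longrightarrow> a i + c \<le> 0"
      using \<beta> by (auto simp: Bset_def Vbox_def)
    have "0 \<le> \<eta> i" "\<eta> i \<le> 1"
      using \<eta> by (auto simp: Vbox_def)
    with x01 B show "0 \<le> (a i + c) * (\<eta> i - x i)"
      by (cases "x i = 0"; cases "x i = 1") (auto intro: mult_nonpos_nonpos)
    show "0 \<le> m i"
      by (rule m)
  qed
  finally show ?thesis .
qed

text \<open>Moving a small amount of mass from a vertex \<open>j\<close> with \<open>x\<^sub>j > 0\<close> to a vertex \<open>i\<close> with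
  \<open>x\<^sub>i < 1\<close> is an admissible variation.\<close>
lemma variational_inequality_exchange:
  fixes a m x :: "'v::finite \<Rightarrow> real"
  assumes m: "\<And>k. 0 < m k" and x: "x \<in> Vbox"
    and VI: "\<forall>\<eta>\<in>Vbox. (\<Sum>k\<in>UNIV. \<eta> k * m k) = (\<Sum>k\<in>UNIV. x k * m k) \<longrightarrow>
               0 \<le> (\<Sum>k\<in>UNIV. a k * (\<eta> k - x k) * m k)"
    and i: "x i < 1" and j: "0 < x j"
  shows "a j \<le> a i"
proof (cases "i = j")
  case False
  have x01: "0 \<le> x k" "x k \<le> 1" for k
    using x by (auto simp: Vbox_def)
  define s where "s = min ((1 - x i) * m i) (x j * m j)"
  have "0 < s"
    using i j m[of i] m[of j] by (simp add: s_def)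
  have si: "s / m i \<le> 1 - x i" and sj: "s / m j \<le> x j"
    using m[of i] m[of j] by (simp_all add: s_def field_simps)
  have "0 < s / m i" "0 < s / m j"
    using \<open>0 < s\<close> m[of i] m[of j] by simp_all
  define \<eta> where "\<eta> k = x k + (if k = i then s / m i else 0) - (if k = j then s / m j else 0)" for k
  have "0 \<le> \<eta> k \<and> \<eta> k \<le> 1" for k
    using x01[of k] si sj \<open>0 < s / m i\<close> \<open>0 < s / m j\<close> False
    by (cases "k = i"; cases "k = j") (auto simp: \<eta>_def)
  then have "\<eta> \<in> Vbox"
    by (simp add: Vbox_def)
  have \<delta>: "(\<eta> k - x k) * m k = (if k = i then s else 0) - (if k = j then s else 0)" for k
    using m[of i] m[of j] False by (auto simp: \<eta>_def)
  have "(\<Sum>k\<in>UNIV. \<eta> k * m k) - (\<Sum>k\<in>UNIV. x k * m k) = (\<Sum>k\<in>UNIV. (\<eta> k - x k) * m k)"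
    by (simp add: sum_subtractf left_diff_distrib)
  also have "\<dots> = 0"
    unfolding \<delta> by (simp add: sum_subtractf)
  finally have "0 \<le> (\<Sum>k\<in>UNIV. a k * ((\<eta> k - x k) * m k))"
    using VI \<open>\<eta> \<in> Vbox\<close> by (simp add: mult.assoc)
  also have "\<dots> = (\<Sum>k\<in>UNIV. (if k = i then a i * s else 0) - (if k = j then a j * s else 0))"
    unfolding \<delta> by (intro sum.cong) auto
  also have "\<dots> = s * (a i - a j)"
    by (simp add: sum_subtractf algebra_simps)
  finally have "0 \<le> s * (a i - a j)" .
  then show ?thesis
    using \<open>0 < s\<close> by (simp add: zero_le_mult_iff)
qed simp

lemma variational_inequality_imp_Bset_multiplier:
  fixes a m x :: "'v::finite \<Rightarrow> real"
  assumes m: "\<And>k. 0 < m k" and x: "x \<in> Vbox"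
    and VI: "\<forall>\<eta>\<in>Vbox. (\<Sum>k\<in>UNIV. \<eta> k * m k) = (\<Sum>k\<in>UNIV. x k * m k) \<longrightarrow>
               0 \<le> (\<Sum>k\<in>UNIV. a k * (\<eta> k - x k) * m k)"
  shows "\<exists>c. (\<lambda>i. a i + c) \<in> Bset x"
proof -
  have x01: "0 \<le> x i" "x i \<le> 1" for i
    using x by (auto simp: Vbox_def)
  note exchange = variational_inequality_exchange[OF m x VI]
  define P where "P = {j. 0 < x j}"
  show ?thesis
  proof (cases "P = {}")
    case True
    then have "\<not> 0 < x i" for i
      by (auto simp: P_def)
    then have "x i = 0" for i
      using x01[of i] by (meson antisym not_less)
    then have "(\<lambda>i. a i - Min (range a)) \<in> Bset x"
      using x by (auto simp: Bset_def intro: Min_le)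
    then show ?thesis
      by (intro exI[of _ "- _"]) simp
  next
    case False
    have "Max (a ` P) \<in> a ` P"
      using False by (intro Max_in) auto
    then obtain j where "j \<in> P" and j: "a j = Max (a ` P)"
      by auto
    have le: "a k \<le> a j" if "0 < x k" for k
      using that by (simp add: j P_def)
    have ge: "a j \<le> a k" if "x k < 1" for k
      using exchange[OF that] \<open>j \<in> P\<close> by (simp add: P_def)
    have "(x i = 0 \<longrightarrow> a j \<le> a i) \<and> (0 < x i \<and> x i < 1 \<longrightarrow> a i = a j)
        \<and> (x i = 1 \<longrightarrow> a i \<le> a j)" for i
      using le[of i] ge[of i] by auto
    then have "(\<lambda>i. a i - a j) \<in> Bset x"
      using x by (simp add: Bset_def)
    then show ?thesis
      by (intro exI[of _ "- _"]) simp
  qed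
qed

lemma variational_inequality_iff_Bset_multiplier:
  fixes a m x :: "'v::finite \<Rightarrow> real"
  assumes "\<And>k. 0 < m k" and "x \<in> Vbox"
  shows "(\<forall>\<eta>\<in>Vbox. (\<Sum>k\<in>UNIV. \<eta> k * m k) = (\<Sum>k\<in>UNIV. x k * m k) \<longrightarrow>
            0 \<le> (\<Sum>k\<in>UNIV. a k * (\<eta> k - x k) * m k))
         \<longleftrightarrow> (\<exists>c. (\<lambda>i. a i + c) \<in> Bset x)"
proof
  assume "\<forall>\<eta>\<in>Vbox. (\<Sum>k\<in>UNIV. \<eta> k * m k) = (\<Sum>k\<in>UNIV. x k * m k) \<longrightarrow>
            0 \<le> (\<Sum>k\<in>UNIV. a k * (\<eta> k - x k) * m k)"
  then show "\<exists>c. (\<lambda>i. a i + c) \<in> Bset x"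
    by (rule variational_inequality_imp_Bset_multiplier[OF assms])
next
  assume "\<exists>c. (\<lambda>i. a i + c) \<in> Bset x"
  then show "\<forall>\<eta>\<in>Vbox. (\<Sum>k\<in>UNIV. \<eta> k * m k) = (\<Sum>k\<in>UNIV. x k * m k) \<longrightarrow>
            0 \<le> (\<Sum>k\<in>UNIV. a k * (\<eta> k - x k) * m k)"
    using Bset_multiplier_imp_variational_inequality[where m = m, OF less_imp_le[OF assms(1)]] by blast
qed

lemma AC_residual_mass:
  fixes w :: "'v::finite \<Rightarrow> 'v \<Rightarrow> real"
  assumes "weighted_graph w" and "CARD('v) \<ge> 2"
  shows "mass w r (\<lambda>i. \<epsilon> * v i + \<epsilon> * lap w r x i - x i + avg w r x) = \<epsilon> * ipV w r v (\<lambda>_. 1)"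
proof -
  have "mass w r (\<lambda>i. \<epsilon> * v i + \<epsilon> * lap w r x i - x i + avg w r x)
      = \<epsilon> * mass w r v + \<epsilon> * mass w r (lap w r x) - mass w r x + avg w r x * mass w r (\<lambda>_. 1)"
    by (simp add: mass_def ipV_def sum.distrib sum_subtractf sum_distrib_left sum_distrib_right algebra_simps)
  also have "\<dots> = \<epsilon> * mass w r v"
    using mass_lap[OF assms] mass_one_pos[OF assms, of r] by (simp add: avg_def)
  finally show ?thesis
    by (simp add: mass_def)
qed

lemma AC_residual_ipV:
  fixes w :: "'v::finite \<Rightarrow> 'v \<Rightarrow> real"
  assumes "weighted_graph w" and "CARD('v) \<ge> 2" and "mass w r \<eta> = mass w r x"
  shows "ipV w r (\<lambda>i. \<epsilon> * v i - x i) (\<lambda>i. \<eta> i - x i)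
           + \<epsilon> * ipE w (grad w x) (\<lambda>i j. grad w \<eta> i j - grad w x i j)
         = ipV w r (\<lambda>i. \<epsilon> * v i + \<epsilon> * lap w r x i - x i + avg w r x) (\<lambda>i. \<eta> i - x i)"
proof -
  have "ipE w (grad w x) (\<lambda>i j. grad w \<eta> i j - grad w x i j) = ipV w r (lap w r x) (\<lambda>i. \<eta> i - x i)"
    unfolding grad_diff[symmetric] by (rule ipE_grad_eq_ipV_lap[OF assms(1,2)])
  moreover have "ipV w r (\<lambda>_. 1) (\<lambda>i. \<eta> i - x i) = 0"
    using assms(3) by (simp add: mass_def ipV_def sum_subtractf left_diff_distrib)
  moreover have "ipV w r (\<lambda>i. \<epsilon> * v i + \<epsilon> * lap w r x i - x i + avg w r x) (\<lambda>i. \<eta> i - x i)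
      = ipV w r (\<lambda>i. \<epsilon> * v i - x i) (\<lambda>i. \<eta> i - x i) + \<epsilon> * ipV w r (lap w r x) (\<lambda>i. \<eta> i - x i)
        + avg w r x * ipV w r (\<lambda>_. 1) (\<lambda>i. \<eta> i - x i)"
    unfolding ipV_def sum_distrib_left sum.distrib[symmetric] by (intro sum.cong) (simp_all add: algebra_simps)
  ultimately show ?thesis
    by simp
qed

definition AC_multiplier ::
  "('v::finite \<Rightarrow> 'v \<Rightarrow> real) \<Rightarrow> real \<Rightarrow> real \<Rightarrow> ('v \<Rightarrow> real) \<Rightarrow> ('v \<Rightarrow> real) \<Rightarrow> ('v \<Rightarrow> real) \<Rightarrow> bool"
where
  "AC_multiplier w r \<epsilon> x v \<beta> \<longleftrightarrow>
     (\<forall>i. \<epsilon> * v i + \<epsilon> * lap w r x i - x i + avg w r x = \<beta> i - avg w r \<beta>) \<and> \<beta> \<in> Bset x"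

lemma exists_AC_multiplier_iff_variational_inequality:
  fixes w :: "'v::finite \<Rightarrow> 'v \<Rightarrow> real"
  assumes graph: "weighted_graph w" and two: "CARD('v) \<ge> 2" and eps: "0 < \<epsilon>" and x: "x \<in> Vbox"
  shows "(\<exists>\<beta>. AC_multiplier w r \<epsilon> x v \<beta>)
    \<longleftrightarrow> (\<forall>\<eta>\<in>Vbox. mass w r \<eta> = mass w r x \<longrightarrow>
           ipV w r (\<lambda>i. \<epsilon> * v i - x i) (\<lambda>i. \<eta> i - x i)
           + \<epsilon> * ipE w (grad w x) (\<lambda>i j. grad w \<eta> i j - grad w x i j) \<ge> 0)
        \<and> ipV w r v (\<lambda>_. 1) = 0"
    (is "?AC \<longleftrightarrow> ?VI \<and> ?mass")
proof -
  define a where "a = (\<lambda>i. \<epsilon> * v i + \<epsilon> * lap w r x i - x i + avg w r x)"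
  have "?AC \<longleftrightarrow> (\<exists>\<beta>\<in>Bset x. \<forall>i. a i = \<beta> i - avg w r \<beta>)"
    unfolding a_def AC_multiplier_def by blast
  also have "\<dots> \<longleftrightarrow> mass w r a = 0 \<and> (\<exists>c. (\<lambda>i. a i + c) \<in> Bset x)"
    using mass_one_pos[OF graph two, of r] by (intro exists_shifted_by_avg_iff) simp
  also have "mass w r a = 0 \<longleftrightarrow> ?mass"
    using eps unfolding a_def AC_residual_mass[OF graph two] by simp
  also have "(\<exists>c. (\<lambda>i. a i + c) \<in> Bset x) \<longleftrightarrow>
      (\<forall>\<eta>\<in>Vbox. mass w r \<eta> = mass w r x \<longrightarrow> 0 \<le> ipV w r a (\<lambda>i. \<eta> i - x i))"
    using variational_inequality_iff_Bset_multiplier[OF _ x, of "\<lambda>i. deg w i powr r" a]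
    by (simp add: mass_def ipV_def deg_pos[OF graph two, THEN order_less_imp_not_eq2])
  also have "\<dots> \<longleftrightarrow> ?VI"
    using AC_residual_ipV[OF graph two] by (simp add: a_def)
  finally show ?thesis
    by blast
qed

section \<open>Mass-conserving double-obstacle flow\<close>

lemma mc_dobs_AC_solution_iff_AC_multiplier:
  "mc_dobs_AC_solution w r \<epsilon> T u \<beta> \<longleftrightarrow> (\<forall>t\<in>T. u t \<in> Vbox) \<and> continuous_on T u \<and>
     (\<exists>u'. H1loc_deriv T u u' \<and> (AE t in lebesgue. t \<in> T \<longrightarrow> AC_multiplier w r \<epsilon> (u t) (u' t) (\<beta> t)))"
  by (simp add: mc_dobs_AC_solution_def AC_multiplier_def)

text \<open>The multiplier \<open>\<beta>\<close> is not required to depend measurably on \<open>t\<close>, so it can be chosen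
  pointwise; only the time derivative has to be matched, and it is unique almost everywhere.\<close>
lemma exists_mc_dobs_AC_solution_iff:
  fixes u u' :: "real \<Rightarrow> 'v::finite \<Rightarrow> real"
  assumes T: "is_interval T" and uV: "\<forall>t\<in>T. u t \<in> Vbox"
    and uH1: "H1loc_deriv T u u'" and ucont: "continuous_on T u"
  shows "(\<exists>\<beta>. mc_dobs_AC_solution w r \<epsilon> T u \<beta>)
    \<longleftrightarrow> (AE t in lebesgue. t \<in> T \<longrightarrow> (\<exists>\<beta>. AC_multiplier w r \<epsilon> (u t) (u' t) \<beta>))"
proof
  assume "\<exists>\<beta>. mc_dobs_AC_solution w r \<epsilon> T u \<beta>"
  then obtain \<beta> u'' where u'': "H1loc_deriv T u u''"
    and "AE t in lebesgue. t \<in> T \<longrightarrow> AC_multiplier w r \<epsilon> (u t) (u'' t) (\<beta> t)"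
    unfolding mc_dobs_AC_solution_iff_AC_multiplier by blast
  moreover have "AE t in lebesgue. t \<in> T \<longrightarrow> u' t = u'' t"
    using T uH1 u'' by (rule H1loc_deriv_unique)
  ultimately show "AE t in lebesgue. t \<in> T \<longrightarrow> (\<exists>\<beta>. AC_multiplier w r \<epsilon> (u t) (u' t) \<beta>)"
    by eventually_elim auto
next
  define \<beta> where "\<beta> = (\<lambda>t. SOME \<beta>. AC_multiplier w r \<epsilon> (u t) (u' t) \<beta>)"
  assume "AE t in lebesgue. t \<in> T \<longrightarrow> (\<exists>\<beta>. AC_multiplier w r \<epsilon> (u t) (u' t) \<beta>)"
  then have "AE t in lebesgue. t \<in> T \<longrightarrow> AC_multiplier w r \<epsilon> (u t) (u' t) (\<beta> t)"
  proof eventually_elim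
    case (elim t)
    show ?case
    proof
      assume "t \<in> T"
      with elim obtain b where "AC_multiplier w r \<epsilon> (u t) (u' t) b"
        by blast
      then show "AC_multiplier w r \<epsilon> (u t) (u' t) (\<beta> t)"
        unfolding \<beta>_def by (rule someI[of "AC_multiplier w r \<epsilon> (u t) (u' t)"])
    qed
  qed
  then have "mc_dobs_AC_solution w r \<epsilon> T u \<beta>"
    unfolding mc_dobs_AC_solution_iff_AC_multiplier using uV ucont uH1 by blast
  then show "\<exists>\<beta>. mc_dobs_AC_solution w r \<epsilon> T u \<beta>"
    by blast
qed

theorem theorem7:
  fixes w :: "'v::finite \<Rightarrow> 'v \<Rightarrow> real" and r \<epsilon> :: real and T :: "real set"
    and u u' :: "real \<Rightarrow> 'v \<Rightarrow> real"
  assumes graph: "weighted_graph w" and two: "CARD('v) \<ge> 2"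
    and r: "0 \<le> r" "r \<le> 1" and eps: "0 < \<epsilon>"
    and T: "is_interval T"
    and uV: "\<forall>t\<in>T. u t \<in> Vbox"
    and uH1: "H1loc_deriv T u u'"
    and ucont: "continuous_on T u"
  shows "(\<exists>\<beta>. mc_dobs_AC_solution w r \<epsilon> T u \<beta>) \<longleftrightarrow>
    (AE t in lebesgue. t \<in> T \<longrightarrow>
       (\<forall>\<eta>\<in>Vbox. mass w r \<eta> = mass w r (u t) \<longrightarrow>
          ipV w r (\<lambda>i. \<epsilon> * u' t i - u t i) (\<lambda>i. \<eta> i - u t i)
          + \<epsilon> * ipE w (grad w (u t)) (\<lambda>i j. grad w \<eta> i j - grad w (u t) i j) \<ge> 0) \<and>
       ipV w r (u' t) (\<lambda>_. 1) = 0)"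
  unfolding exists_mc_dobs_AC_solution_iff[OF T uV uH1 ucont] using uV
  by (intro AE_cong) (simp add: exists_AC_multiplier_iff_variational_inequality[OF graph two eps])

end
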